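(* Let $X$ be an infinite compact metrizable space, $h\colon X\to X$ a minimal homeomorphism, and suppose $(X,h)$ has the topological small boundary property. Let $\varepsilon>0$. Then for any closed set $F\subset X$ and any open set $U\subset X$ with $F\subset U$, there exist a closed set $K\subset X$ and an open set $V\subset X$ such that (1) $F\subset\mathrm{int}(K)\subset K\subset V\subset\overline{V}\subset U$; (2) $\partial K$ and $\partial V$ are topologically $h$-small; (3) $\mu(V\setminus K)<\varepsilon$ for all $\mu\in M_h(X)$.
   Context: $M_h(X)$ denotes the set of $h$-invariant Borel probability measures on $X$; $\partial A$ is the boundary of $A$. A closed set $F\subset X$ is topologically $h$-small if there is $m\in\mathbb{Z}_{+}$ such that whenever $d(0),\dots,d(m)$ are $m+1$ distinct integers, $h^{d(0)}(F)\cap\cdots\cap h^{d(m)}(F)=\varnothing$. $(X,h)$ has the topological small boundary property if whenever $F,K\subset X$ are disjoint compact sets, there exist open sets $U,V\subset X$ with $F\subset U$, $K\subset V$, $\overline{U}\cap\overline{V}=\varnothing$ and $\partial U$ topologically $h$-small. *)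

theory Defs
  imports "HOL-Probability.Probability"
begin

text \<open>The space X is the whole (compact) metric type 'a. Integer powers of h.\<close>
definition hpow :: "('a \<Rightarrow> 'a) \<Rightarrow> int \<Rightarrow> 'a \<Rightarrow> 'a" where
  "hpow h d = (if d \<ge> 0 then h ^^ nat d else (inv h) ^^ nat (- d))"

definition top_small :: "('a::topological_space \<Rightarrow> 'a) \<Rightarrow> 'a set \<Rightarrow> bool" where
  "top_small h F \<longleftrightarrow> closed F \<and>
     (\<exists>m::nat. \<forall>D::int set. finite D \<and> card D = m + 1 \<longrightarrow> (\<Inter>d\<in>D. hpow h d ` F) = {})"

definition top_small_boundary_property :: "('a::topological_space \<Rightarrow> 'a) \<Rightarrow> bool" where
  "top_small_boundary_property h \<longleftrightarrow>
     (\<forall>F K. compact F \<and> compact K \<and> F \<inter> K = {} \<longrightarrow>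
        (\<exists>U V. open U \<and> open V \<and> F \<subseteq> U \<and> K \<subseteq> V \<and> closure U \<inter> closure V = {}
               \<and> top_small h (frontier U)))"

definition minimal_map :: "('a::topological_space \<Rightarrow> 'a) \<Rightarrow> bool" where
  "minimal_map h \<longleftrightarrow> (\<forall>A. closed A \<and> h ` A = A \<longrightarrow> A = {} \<or> A = UNIV)"

definition invariant_measures :: "('a::topological_space \<Rightarrow> 'a) \<Rightarrow> 'a measure set" where
  "invariant_measures h = {\<mu>. sets \<mu> = sets borel \<and> prob_space \<mu> \<and>
      (\<forall>A\<in>sets borel. emeasure \<mu> (h -` A) = emeasure \<mu> A)}"

end

theory Submission imports Defs begin

text \<open>
  Separate F from the complement of U by an open set W with topologically small boundary E.
  Smallness means that a point lies in at most m of the sets h^-k(E), k < N; by compactness the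
  same holds for some open Q \<supseteq> E, and integrating the number of visits bounds \<mu>(Q) by m/N < \<epsilon>
  for every invariant \<mu>. A second separation, of E from the complement of Q - F, gives an open
  P \<supseteq> E with small boundary and closure inside Q - F. Then K = closure W - P and V = W work,
  as V - K \<subseteq> P \<subseteq> Q.
\<close>

lemma hpow_neg_image:
  assumes "bij h"
  shows "hpow h (- int k) ` A = (h ^^ k) -` A"
proof -
  have "hpow h (- int k) = inv (h ^^ k)"
    unfolding hpow_def inv_fn[OF assms] by (cases "k = 0") auto
  then show ?thesis
    using bij_vimage_eq_inv_image[OF bij_fn[OF assms]] by simp
qed

lemma top_small_Inter_vimage_funpow:
  assumes "top_small h E" and "bij h"
  obtains m where "\<And>S. finite S \<Longrightarrow> card S = Suc m \<Longrightarrow> (\<Inter>k\<in>S. (h ^^ k) -` E) = {}"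
proof -
  obtain m where m: "\<And>D::int set. finite D \<Longrightarrow> card D = m + 1 \<Longrightarrow> (\<Inter>d\<in>D. hpow h d ` E) = {}"
    using assms(1) unfolding top_small_def by blast
  have "(\<Inter>k\<in>S. (h ^^ k) -` E) = {}" if "finite S" "card S = Suc m" for S
  proof -
    have "inj_on (\<lambda>k::nat. - int k) S" by (auto simp: inj_on_def)
    then have "card ((\<lambda>k. - int k) ` S) = m + 1" using that by (simp add: card_image)
    then have "(\<Inter>d\<in>(\<lambda>k. - int k) ` S. hpow h d ` E) = {}" using m[of "(\<lambda>k. - int k) ` S"] that(1) by simp
    then show ?thesis by (simp add: hpow_neg_image[OF assms(2)])
  qed
  then show thesis using that by blast
qed

lemma card_Collect_mem_le_of_Inter_empty:
  assumes "finite I" and "\<And>S. S \<subseteq> I \<Longrightarrow> card S = Suc m \<Longrightarrow> (\<Inter>i\<in>S. A i) = {}"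
  shows "card {i\<in>I. x \<in> A i} \<le> m"
proof (rule ccontr)
  assume "\<not> card {i\<in>I. x \<in> A i} \<le> m"
  then obtain T where "T \<subseteq> {i\<in>I. x \<in> A i}" "card T = Suc m"
    using obtain_subset_with_card_n[of "Suc m" "{i\<in>I. x \<in> A i}"] by auto
  then have "T \<subseteq> I" "x \<in> (\<Inter>i\<in>T. A i)" by auto
  with assms(2) \<open>card T = Suc m\<close> show False by blast
qed

lemma top_small_subset_Un:
  assumes "top_small h A" and "top_small h B" and "closed C" and "C \<subseteq> A \<union> B"
  shows "top_small h C"
proof -
  obtain a where a: "\<And>D::int set. finite D \<Longrightarrow> card D = Suc a \<Longrightarrow> (\<Inter>d\<in>D. hpow h d ` A) = {}"
    using assms(1) unfolding top_small_def by auto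
  obtain b where b: "\<And>D::int set. finite D \<Longrightarrow> card D = Suc b \<Longrightarrow> (\<Inter>d\<in>D. hpow h d ` B) = {}"
    using assms(2) unfolding top_small_def by auto
  have "(\<Inter>d\<in>D. hpow h d ` C) = {}" if D: "finite D" "card D = Suc (a + b)" for D
  proof (rule ccontr)
    assume "(\<Inter>d\<in>D. hpow h d ` C) \<noteq> {}"
    then obtain x where "\<And>d. d \<in> D \<Longrightarrow> x \<in> hpow h d ` C" by auto
    then have "D = {d\<in>D. x \<in> hpow h d ` A} \<union> {d\<in>D. x \<in> hpow h d ` B}"
      using assms(4) by blast
    then have "card D \<le> card {d\<in>D. x \<in> hpow h d ` A} + card {d\<in>D. x \<in> hpow h d ` B}"
      by (metis card_Un_le)
    also have "\<dots> \<le> a + b"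
    proof (intro add_mono card_Collect_mem_le_of_Inter_empty[OF D(1)])
      show "(\<Inter>d\<in>S. hpow h d ` A) = {}" if "S \<subseteq> D" "card S = Suc a" for S
        using a that D(1) finite_subset by blast
      show "(\<Inter>d\<in>S. hpow h d ` B) = {}" if "S \<subseteq> D" "card S = Suc b" for S
        using b that D(1) finite_subset by blast
    qed
    finally show False using D(2) by simp
  qed
  then show ?thesis using assms(3) unfolding top_small_def by auto
qed

lemma measurable_funpow: "f \<in> measurable M M \<Longrightarrow> f ^^ n \<in> measurable M M"
  by (induction n) (auto intro: measurable_comp)

lemma invariant_measure_vimage_funpow:
  assumes "\<mu> \<in> invariant_measures h" and "h \<in> borel_measurable borel" and "A \<in> sets borel"
  shows "emeasure \<mu> ((h ^^ k) -` A) = emeasure \<mu> A"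
  using assms(3)
proof (induction k arbitrary: A)
  case (Suc k)
  have "h -` A \<in> sets borel"
    using measurable_sets[OF assms(2) Suc.prems] by simp
  then have "emeasure \<mu> ((h ^^ k) -` (h -` A)) = emeasure \<mu> (h -` A)"
    by (rule Suc.IH)
  also have "\<dots> = emeasure \<mu> A"
    using assms(1) Suc.prems unfolding invariant_measures_def by blast
  finally show ?case by (simp add: vimage_comp comp_def)
qed simp

text \<open>N \<mu>(Q) is the integral of the number of visits of x, h x, ..., h^(N-1) x to Q.\<close>
lemma invariant_measure_le_visits:
  assumes mu: "\<mu> \<in> invariant_measures h" and h: "h \<in> borel_measurable borel"
    and Q: "Q \<in> sets borel" and "N > 0"
    and visits: "\<And>x. card {k\<in>{..<N}. x \<in> (h ^^ k) -` Q} \<le> m"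
  shows "measure \<mu> Q \<le> real m / real N"
proof -
  interpret prob_space \<mu> using mu unfolding invariant_measures_def by blast
  have sets: "sets \<mu> = sets borel" using mu unfolding invariant_measures_def by blast
  have Qk: "(h ^^ k) -` Q \<in> sets \<mu>" for k
    using measurable_sets[OF measurable_funpow[OF h] Q] sets by simp
  have "of_nat N * emeasure \<mu> Q = (\<Sum>k<N. emeasure \<mu> ((h ^^ k) -` Q))"
    using invariant_measure_vimage_funpow[OF mu h Q] by simp
  also have "\<dots> = \<integral>\<^sup>+ x. (\<Sum>k<N. indicator ((h ^^ k) -` Q) x) \<partial>\<mu>"
    using Qk by (simp add: nn_integral_sum)
  also have "\<dots> \<le> \<integral>\<^sup>+ x. of_nat m \<partial>\<mu>"
  proof (rule nn_integral_mono)
    fix x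
    have "(\<Sum>k<N. indicator ((h ^^ k) -` Q) x :: ennreal) = of_nat (card {k\<in>{..<N}. x \<in> (h ^^ k) -` Q})"
      by (simp add: indicator_def Collect_conj_eq lessThan_def)
    then show "(\<Sum>k<N. indicator ((h ^^ k) -` Q) x) \<le> (of_nat m :: ennreal)"
      using visits by simp
  qed
  also have "\<dots> = of_nat m" by (simp add: emeasure_space_1)
  finally have "ennreal (real N * measure \<mu> Q) \<le> ennreal (real m)"
    by (simp add: emeasure_eq_measure ennreal_mult' ennreal_of_nat_eq_real_of_nat)
  then have "real N * measure \<mu> Q \<le> real m" by (subst (asm) ennreal_le_iff) auto
  then show ?thesis using \<open>N > 0\<close> by (simp add: field_simps)
qed

lemma continuous_on_funpow:
  fixes f :: "'a::topological_space \<Rightarrow> 'a"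
  assumes "continuous_on UNIV f"
  shows "continuous_on UNIV (f ^^ n)"
proof (induction n)
  case (Suc n)
  have "continuous_on (range (f ^^ n)) f" using assms continuous_on_subset by blast
  then show ?case using continuous_on_compose[OF Suc] by simp
qed simp

text \<open>The sum of the distances of f_k x to E (k \<in> S) is positive everywhere, hence bounded
  below by some \<delta> > 0 on the compact space; a \<delta>/|S|-neighbourhood of E then works.\<close>
lemma open_superset_Inter_vimage_empty:
  fixes f :: "'i \<Rightarrow> 'b::topological_space \<Rightarrow> 'a::metric_space"
  assumes "compact (UNIV :: 'b set)" and "finite S" and "\<And>k. continuous_on UNIV (f k)"
    and "closed E" and empty: "(\<Inter>k\<in>S. f k -` E) = {}"
  obtains Q where "open Q" "E \<subseteq> Q" "(\<Inter>k\<in>S. f k -` Q) = {}"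
proof (cases "E = {}")
  case True
  then show thesis using that[of "{}"] empty by simp
next
  case False
  have "S \<noteq> {}" using empty by auto
  then have "card S > 0" using assms(2) by (simp add: card_gt_0_iff)
  define \<psi> where "\<psi> x = (\<Sum>k\<in>S. infdist (f k x) E)" for x
  have "continuous_on UNIV \<psi>"
    unfolding \<psi>_def by (intro continuous_on_sum continuous_on_infdist assms(3))
  then obtain x0 where x0: "\<And>x. \<psi> x0 \<le> \<psi> x"
    using continuous_attains_inf[OF assms(1)] by auto
  obtain k0 where "k0 \<in> S" "f k0 x0 \<notin> E" using empty by auto
  then have "infdist (f k0 x0) E > 0"
    using assms(4) False by (rule_tac infdist_pos_not_in_closed) auto
  moreover have "infdist (f k0 x0) E \<le> \<psi> x0"
    unfolding \<psi>_def using \<open>k0 \<in> S\<close> assms(2) by (intro member_le_sum infdist_nonneg)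
  ultimately have "\<psi> x0 > 0" by linarith
  define Q where "Q = {y. infdist y E < \<psi> x0 / card S}"
  show thesis
  proof (rule that)
    show "open Q" unfolding Q_def
      by (intro open_Collect_less continuous_on_infdist continuous_on_id continuous_on_const)
    show "E \<subseteq> Q"
      unfolding Q_def using \<open>\<psi> x0 > 0\<close> \<open>card S > 0\<close> by auto
    show "(\<Inter>k\<in>S. f k -` Q) = {}"
    proof (rule ccontr)
      assume "(\<Inter>k\<in>S. f k -` Q) \<noteq> {}"
      then obtain x where "\<And>k. k \<in> S \<Longrightarrow> infdist (f k x) E < \<psi> x0 / card S"
        unfolding Q_def by auto
      then have "\<psi> x < (\<Sum>k\<in>S. \<psi> x0 / card S)"
        unfolding \<psi>_def using assms(2) \<open>S \<noteq> {}\<close> by (intro sum_strict_mono) auto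
      also have "\<dots> = \<psi> x0" using assms(2) \<open>S \<noteq> {}\<close> by simp
      finally show False using x0[of x] by simp
    qed
  qed
qed

lemma open_superset_Inter_vimage_empty_finite_family:
  fixes f :: "'i \<Rightarrow> 'b::topological_space \<Rightarrow> 'a::metric_space"
  assumes "compact (UNIV :: 'b set)" and "finite \<S>" and "\<And>S. S \<in> \<S> \<Longrightarrow> finite S"
    and "\<And>k. continuous_on UNIV (f k)" and "closed E"
    and "\<And>S. S \<in> \<S> \<Longrightarrow> (\<Inter>k\<in>S. f k -` E) = {}"
  obtains Q where "open Q" "E \<subseteq> Q" "\<And>S. S \<in> \<S> \<Longrightarrow> (\<Inter>k\<in>S. f k -` Q) = {}"
proof -
  have "\<forall>S\<in>\<S>. \<exists>Q. open Q \<and> E \<subseteq> Q \<and> (\<Inter>k\<in>S. f k -` Q) = {}"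
  proof
    fix S assume "S \<in> \<S>"
    obtain Q where "open Q" "E \<subseteq> Q" "(\<Inter>k\<in>S. f k -` Q) = {}"
      using open_superset_Inter_vimage_empty[OF assms(1) assms(3)[OF \<open>S \<in> \<S>\<close>] assms(4,5)
          assms(6)[OF \<open>S \<in> \<S>\<close>]] .
    then show "\<exists>Q. open Q \<and> E \<subseteq> Q \<and> (\<Inter>k\<in>S. f k -` Q) = {}" by blast
  qed
  then obtain Q where Q: "\<forall>S\<in>\<S>. open (Q S) \<and> E \<subseteq> Q S \<and> (\<Inter>k\<in>S. f k -` Q S) = {}"
    by (rule bchoice[elim_format]) blast
  show thesis
  proof (rule that[of "\<Inter>T\<in>\<S>. Q T"])
    show "open (\<Inter>T\<in>\<S>. Q T)" using Q assms(2) by (intro open_INT) auto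
    show "E \<subseteq> (\<Inter>T\<in>\<S>. Q T)" using Q by (intro INT_greatest) auto
    fix S assume "S \<in> \<S>"
    then have "(\<Inter>k\<in>S. f k -` (\<Inter>T\<in>\<S>. Q T)) \<subseteq> (\<Inter>k\<in>S. f k -` Q S)" by blast
    then show "(\<Inter>k\<in>S. f k -` (\<Inter>T\<in>\<S>. Q T)) = {}" using Q \<open>S \<in> \<S>\<close> by auto
  qed
qed

lemma top_small_boundary_property_shrink:
  fixes h :: "'a::topological_space \<Rightarrow> 'a"
  assumes "top_small_boundary_property h" and "compact (UNIV :: 'a set)"
    and "closed F" and "open U" and "F \<subseteq> U"
  obtains W where "open W" "F \<subseteq> W" "closure W \<subseteq> U" "top_small h (frontier W)"
proof -
  have closed_compact: "compact T" if "closed T" for T :: "'a set"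
    using compact_Int_closed[OF assms(2) that] by simp
  have "compact F" "compact (- U)" using assms(3,4) by (auto intro!: closed_compact)
  moreover have "F \<inter> - U = {}" using assms(5) by blast
  ultimately obtain W W' where "open W" "open W'" "F \<subseteq> W" "- U \<subseteq> W'"
      "closure W \<inter> closure W' = {}" "top_small h (frontier W)"
    using assms(1)[unfolded top_small_boundary_property_def, rule_format, of F "- U"] by blast
  moreover have "closure W \<subseteq> U"
    using calculation(4,5) closure_subset[of W'] by blast
  ultimately show thesis using that by blast
qed

lemma top_small_open_superset_measure_less:
  fixes h :: "'a::metric_space \<Rightarrow> 'a"
  assumes "compact (UNIV :: 'a set)" and "bij h" and "continuous_on UNIV h"
    and "top_small h E" and "\<epsilon> > 0"
  obtains Q where "open Q" "E \<subseteq> Q" "\<And>\<mu>. \<mu> \<in> invariant_measures h \<Longrightarrow> measure \<mu> Q < \<epsilon>"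
proof -
  obtain m where m: "\<And>S. finite S \<Longrightarrow> card S = Suc m \<Longrightarrow> (\<Inter>k\<in>S. (h ^^ k) -` E) = {}"
    using top_small_Inter_vimage_funpow[OF assms(4,2)] by blast
  obtain N :: nat where "real m / \<epsilon> < N" using reals_Archimedean2 by blast
  then have "real m < N * \<epsilon>" using assms(5) by (simp add: divide_less_eq)
  then have "N > 0" by (cases N) auto
  with \<open>real m < N * \<epsilon>\<close> have mN: "real m / N < \<epsilon>" by (simp add: divide_less_eq mult.commute)
  define \<S> where "\<S> = {S. S \<subseteq> {..<N} \<and> card S = Suc m}"
  have "finite \<S>" unfolding \<S>_def by (rule finite_subset[of _ "Pow {..<N}"]) auto
  moreover have "S \<in> \<S> \<Longrightarrow> finite S" for S unfolding \<S>_def using finite_subset by blast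
  moreover have "closed E" using assms(4) unfolding top_small_def by blast
  moreover have "S \<in> \<S> \<Longrightarrow> (\<Inter>k\<in>S. (h ^^ k) -` E) = {}" for S
    using m \<open>S \<in> \<S> \<Longrightarrow> finite S\<close> unfolding \<S>_def by blast
  ultimately obtain Q where Q: "open Q" "E \<subseteq> Q"
      "\<And>S. S \<in> \<S> \<Longrightarrow> (\<Inter>k\<in>S. (h ^^ k) -` Q) = {}"
    using open_superset_Inter_vimage_empty_finite_family[OF assms(1), of \<S> "\<lambda>k. h ^^ k" E,
        OF _ _ continuous_on_funpow[OF assms(3)]]
    by blast
  have "measure \<mu> Q < \<epsilon>" if "\<mu> \<in> invariant_measures h" for \<mu>
  proof -
    have "measure \<mu> Q \<le> real m / N"
    proof (rule invariant_measure_le_visits[OF that _ _ \<open>N > 0\<close>])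
      show "h \<in> borel_measurable borel" by (rule borel_measurable_continuous_onI[OF assms(3)])
      show "Q \<in> sets borel" using Q(1) by simp
      show "card {k\<in>{..<N}. x \<in> (h ^^ k) -` Q} \<le> m" for x
        using card_Collect_mem_le_of_Inter_empty[of "{..<N}" m "\<lambda>k. (h ^^ k) -` Q"] Q(3)
        unfolding \<S>_def by blast
    qed
    with mN show ?thesis by linarith
  qed
  with Q show thesis using that by blast
qed

lemma frontier_closure_Diff_subset: "frontier (closure A - B) \<subseteq> frontier A \<union> frontier B"
proof -
  have "frontier (closure A - B) \<subseteq> frontier (closure A) \<union> frontier (- B)"
    using frontier_Int_subset[of "closure A" "- B"] by (simp add: Diff_eq)
  moreover have "frontier (closure A) \<subseteq> frontier A"
    unfolding frontier_def using interior_mono[OF closure_subset[of A]] by auto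
  ultimately show ?thesis by auto
qed

theorem proposition4p9:
  fixes h :: "'a::metric_space \<Rightarrow> 'a" and \<epsilon> :: real
    and F U :: "'a set"
  assumes "compact (UNIV :: 'a set)"
    and "infinite (UNIV :: 'a set)"
    and "\<exists>g. homeomorphism UNIV UNIV h g"
    and "minimal_map h"
    and "top_small_boundary_property h"
    and "\<epsilon> > 0"
    and "closed F" and "open U" and "F \<subseteq> U"
  shows "\<exists>K V. closed K \<and> open V \<and>
           F \<subseteq> interior K \<and> interior K \<subseteq> K \<and> K \<subseteq> V \<and> V \<subseteq> closure V \<and> closure V \<subseteq> U \<and>
           top_small h (frontier K) \<and> top_small h (frontier V) \<and>
           (\<forall>\<mu>\<in>invariant_measures h. measure \<mu> (V - K) < \<epsilon>)"
proof -
  obtain g where hg: "homeomorphism UNIV UNIV h g" using assms(3) by blast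
  then have "continuous_on UNIV h" "g \<circ> h = id" "h \<circ> g = id"
    by (auto simp: homeomorphism_def fun_eq_iff)
  then have "bij h" by (blast intro: o_bij)
  obtain W where W: "open W" "F \<subseteq> W" "closure W \<subseteq> U" "top_small h (frontier W)"
    using top_small_boundary_property_shrink[OF assms(5,1,7,8,9)] .
  obtain Q where Q: "open Q" "frontier W \<subseteq> Q"
      "\<And>\<mu>. \<mu> \<in> invariant_measures h \<Longrightarrow> measure \<mu> Q < \<epsilon>"
    using top_small_open_superset_measure_less[OF assms(1) \<open>bij h\<close> \<open>continuous_on UNIV h\<close> W(4) assms(6)]
    by blast
  have "frontier W \<subseteq> Q - F" using Q(2) W(1,2) by (auto simp: frontier_def interior_open)
  then obtain P where P: "open P" "frontier W \<subseteq> P" "closure P \<subseteq> Q - F" "top_small h (frontier P)"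
    using top_small_boundary_property_shrink[OF assms(5,1) frontier_closed open_Diff[OF Q(1) assms(7)]]
    by blast
  define K where "K = closure W - P"
  have "W - closure P \<subseteq> K" "open (W - closure P)"
    using W(1) closure_subset[of W] closure_subset[of P] by (auto simp: K_def)
  then have "W - closure P \<subseteq> interior K" by (rule interior_maximal)
  then have "F \<subseteq> interior K" using W(2) P(3) by blast
  moreover have "K \<subseteq> W" using P(2) W(1) by (auto simp: K_def frontier_def interior_open)
  moreover have "top_small h (frontier K)"
    unfolding K_def using W(4) P(4) frontier_closed frontier_closure_Diff_subset
    by (rule top_small_subset_Un)
  moreover have "measure \<mu> (W - K) < \<epsilon>" if "\<mu> \<in> invariant_measures h" for \<mu>
  proof -
    interpret prob_space \<mu> using that unfolding invariant_measures_def by blast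
    have "W - K \<subseteq> Q" using P(3) closure_subset[of P] closure_subset[of W] by (auto simp: K_def)
    moreover have "Q \<in> sets \<mu>" using that Q(1) unfolding invariant_measures_def by simp
    ultimately have "measure \<mu> (W - K) \<le> measure \<mu> Q" by (rule finite_measure_mono)
    with Q(3)[OF that] show ?thesis by linarith
  qed
  moreover have "closed K" unfolding K_def using P(1) by blast
  ultimately show ?thesis
    using W(1,3,4) closure_subset[of W] interior_subset[of K] by blast
qed

end
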